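(* Let $\Sigma$ be a set of basic identities in an algebraic language $\mathcal L$ whose set of constant symbols is $C$, and suppose $\Sigma$ is consistent. Then for every cardinal $\kappa>|C|$, $\Sigma$ has a model of cardinality $\kappa$.
   Context: An $\mathcal L$-term is basic if it contains at most one nonnullary function symbol (so it is a variable, a constant symbol, or $F(u_1,\dots,u_m)$ with each $u_i$ a variable or constant symbol); an identity $s\approx t$ is basic if $s,t$ are basic. For a set $X$ of variables, the weak closure $\overline{\Sigma}$ of $\Sigma$ in the variables $X$ is the smallest set of basic identities containing $\Sigma$ such that: (i) $t\approx t\in\overline\Sigma$ for every basic term $t$ with variables from $X$; (ii) if $s\approx t\in\overline\Sigma$ then $t\approx s\in\overline\Sigma$; (iii) if $r\approx s, s\approx t\in\overline\Sigma$ then $r\approx t\in\overline\Sigma$; (iv) if $s\approx t\in\overline\Sigma$ and $\gamma\colon X\to X\cup C$ is any function, then $s[\gamma]\approx t[\gamma]\in\overline\Sigma$, where $s[\gamma]$ replaces each variable $x$ by $\gamma(x)$; (v) if $t$ is a basic term and $c\approx d\in\overline\Sigma$ for $c,d\in C$, then $t\approx t'\in\overline\Sigma$, where $t'$ is obtained from $t$ by replacing one occurrence of $c$ by $d$. Write $\Sigma\vdash_X\varphi$ if $\varphi\in\overline\Sigma$. $X$ is large enough if it contains at least two variables, $|X|$ is at least the arity of every function symbol occurring in $\Sigma$, and $|X|$ is at least the number of distinct variables occurring in any identity of $\Sigma$. $\Sigma$ is inconsistent if $\Sigma\vdash_X x\approx y$ for some distinct $x,y\in X$ with $X$ large enough,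 and consistent otherwise. *)

theory Defs
  imports Main "HOL-Library.Equipollence"
begin

datatype ('f, 'c) trm = V nat | Cn 'c | Fn 'f "('f, 'c) trm list"

fun vars :: "('f, 'c) trm \<Rightarrow> nat set" where
  "vars (V x) = {x}"
| "vars (Cn c) = {}"
| "vars (Fn f us) = \<Union> (set (map vars us))"

fun funs :: "('f, 'c) trm \<Rightarrow> 'f set" where
  "funs (V x) = {}"
| "funs (Cn c) = {}"
| "funs (Fn f us) = insert f (\<Union> (set (map funs us)))"

fun subst :: "(nat \<Rightarrow> ('f, 'c) trm) \<Rightarrow> ('f, 'c) trm \<Rightarrow> ('f, 'c) trm" where
  "subst \<gamma> (V x) = \<gamma> x"
| "subst \<gamma> (Cn c) = Cn c"
| "subst \<gamma> (Fn f us) = Fn f (map (subst \<gamma>) us)"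

definition atom_term :: "'c set \<Rightarrow> ('f, 'c) trm \<Rightarrow> bool" where
  "atom_term C u \<longleftrightarrow> (\<exists>x. u = V x) \<or> (\<exists>c\<in>C. u = Cn c)"

definition basic_term :: "'f set \<Rightarrow> ('f \<Rightarrow> nat) \<Rightarrow> 'c set \<Rightarrow> ('f, 'c) trm \<Rightarrow> bool" where
  "basic_term Fs ar C t \<longleftrightarrow> atom_term C t \<or>
     (\<exists>f us. t = Fn f us \<and> f \<in> Fs \<and> length us = ar f \<and> (\<forall>u\<in>set us. atom_term C u))"

definition basic_identity :: "'f set \<Rightarrow> ('f \<Rightarrow> nat) \<Rightarrow> 'c set \<Rightarrow> ('f, 'c) trm \<times> ('f, 'c) trm \<Rightarrow> bool" where
  "basic_identity Fs ar C e \<longleftrightarrow> basic_term Fs ar C (fst e) \<and> basic_term Fs ar C (snd e)"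

definition replace_one :: "'c \<Rightarrow> 'c \<Rightarrow> ('f, 'c) trm \<Rightarrow> ('f, 'c) trm \<Rightarrow> bool" where
  "replace_one c d t t' \<longleftrightarrow> (t = Cn c \<and> t' = Cn d) \<or>
     (\<exists>f us i. t = Fn f us \<and> i < length us \<and> us ! i = Cn c \<and> t' = Fn f (us[i := Cn d]))"

inductive wc :: "'f set \<Rightarrow> ('f \<Rightarrow> nat) \<Rightarrow> 'c set \<Rightarrow> (('f, 'c) trm \<times> ('f, 'c) trm) set
    \<Rightarrow> nat set \<Rightarrow> ('f, 'c) trm \<times> ('f, 'c) trm \<Rightarrow> bool"
  for Fs ar C \<Sigma> X where
  wc_ax: "e \<in> \<Sigma> \<Longrightarrow> wc Fs ar C \<Sigma> X e"
| wc_refl: "basic_term Fs ar C t \<Longrightarrow> vars t \<subseteq> X \<Longrightarrow> wc Fs ar C \<Sigma> X (t, t)"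
| wc_sym: "wc Fs ar C \<Sigma> X (s, t) \<Longrightarrow> wc Fs ar C \<Sigma> X (t, s)"
| wc_trans: "wc Fs ar C \<Sigma> X (r, s) \<Longrightarrow> wc Fs ar C \<Sigma> X (s, t) \<Longrightarrow> wc Fs ar C \<Sigma> X (r, t)"
| wc_subst: "wc Fs ar C \<Sigma> X (s, t) \<Longrightarrow> (\<forall>x\<in>X. \<gamma> x \<in> V ` X \<union> Cn ` C) \<Longrightarrow>
     (\<forall>x. x \<notin> X \<longrightarrow> \<gamma> x = V x) \<Longrightarrow> wc Fs ar C \<Sigma> X (subst \<gamma> s, subst \<gamma> t)"
| wc_repl: "basic_term Fs ar C t \<Longrightarrow> c \<in> C \<Longrightarrow> d \<in> C \<Longrightarrow> wc Fs ar C \<Sigma> X (Cn c, Cn d) \<Longrightarrow>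
     replace_one c d t t' \<Longrightarrow> wc Fs ar C \<Sigma> X (t, t')"

definition large_enough :: "('f \<Rightarrow> nat) \<Rightarrow> (('f, 'c) trm \<times> ('f, 'c) trm) set \<Rightarrow> nat set \<Rightarrow> bool" where
  "large_enough ar \<Sigma> X \<longleftrightarrow>
     (\<exists>x\<in>X. \<exists>y\<in>X. x \<noteq> y) \<and>
     (\<forall>e\<in>\<Sigma>. \<forall>f\<in>funs (fst e) \<union> funs (snd e). {..<ar f} \<lesssim> X) \<and>
     (\<forall>e\<in>\<Sigma>. vars (fst e) \<union> vars (snd e) \<lesssim> X)"

definition inconsistent :: "'f set \<Rightarrow> ('f \<Rightarrow> nat) \<Rightarrow> 'c set \<Rightarrow> (('f, 'c) trm \<times> ('f, 'c) trm) set \<Rightarrow> bool" where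
  "inconsistent Fs ar C \<Sigma> \<longleftrightarrow>
     (\<exists>X x y. large_enough ar \<Sigma> X \<and> x \<in> X \<and> y \<in> X \<and> x \<noteq> y \<and> wc Fs ar C \<Sigma> X (V x, V y))"

definition consistent :: "'f set \<Rightarrow> ('f \<Rightarrow> nat) \<Rightarrow> 'c set \<Rightarrow> (('f, 'c) trm \<times> ('f, 'c) trm) set \<Rightarrow> bool" where
  "consistent Fs ar C \<Sigma> \<longleftrightarrow> \<not> inconsistent Fs ar C \<Sigma>"

fun eval :: "('c \<Rightarrow> 'k) \<Rightarrow> ('f \<Rightarrow> 'k list \<Rightarrow> 'k) \<Rightarrow> (nat \<Rightarrow> 'k) \<Rightarrow> ('f, 'c) trm \<Rightarrow> 'k" where
  "eval cI fI a (V x) = a x"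
| "eval cI fI a (Cn c) = cI c"
| "eval cI fI a (Fn f us) = fI f (map (eval cI fI a) us)"

definition is_structure :: "'f set \<Rightarrow> ('f \<Rightarrow> nat) \<Rightarrow> 'c set \<Rightarrow> 'k set \<Rightarrow> ('c \<Rightarrow> 'k) \<Rightarrow> ('f \<Rightarrow> 'k list \<Rightarrow> 'k) \<Rightarrow> bool" where
  "is_structure Fs ar C M cI fI \<longleftrightarrow> M \<noteq> {} \<and> (\<forall>c\<in>C. cI c \<in> M) \<and>
     (\<forall>f\<in>Fs. \<forall>xs. length xs = ar f \<and> set xs \<subseteq> M \<longrightarrow> fI f xs \<in> M)"

definition is_model :: "'f set \<Rightarrow> ('f \<Rightarrow> nat) \<Rightarrow> 'c set \<Rightarrow> (('f, 'c) trm \<times> ('f, 'c) trm) set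
    \<Rightarrow> 'k set \<Rightarrow> ('c \<Rightarrow> 'k) \<Rightarrow> ('f \<Rightarrow> 'k list \<Rightarrow> 'k) \<Rightarrow> bool" where
  "is_model Fs ar C \<Sigma> M cI fI \<longleftrightarrow> is_structure Fs ar C M cI fI \<and>
     (\<forall>e\<in>\<Sigma>. \<forall>a. (\<forall>x. a x \<in> M) \<longrightarrow> eval cI fI a (fst e) = eval cI fI a (snd e))"

end

theory Submission
  imports Defs
begin

text \<open>
  The model is built on K itself. Constants are interpreted by an injection of the classes of
  derivably equal constants into K. For a function symbol F and a tuple of values, look for a
  basic term F(w) with an assignment \<beta> that is faithful on it (its variables get pairwise
  distinct values, none of them the value of a constant) such that w evaluates to the tuple and
  F(w) \<approx> p is derivable for some variable or constant p; then F takes the value of p, and a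
  fixed default value otherwise. Two such witnesses differ by a substitution of atoms for
  variables followed by replacements of constants by derivably equal ones, so consistency
  (no x \<approx> y, hence no x \<approx> c and no F(w) \<approx> x with x not occurring in w) makes this well defined.
  Any assignment becomes faithful after substituting for each variable a constant or a canonical
  variable with the same value, and \<Sigma> is closed under substitution, so every identity of \<Sigma> holds.
\<close>

lemma finite_vars: "finite (vars t)"
  by (induction t) auto

lemma subst_id_on_vars: "\<forall>x\<in>vars t. \<gamma> x = V x \<Longrightarrow> subst \<gamma> t = t"
  by (induction t) (auto intro: map_idI)

lemma vars_subst: "vars (subst \<gamma> t) = (\<Union>x\<in>vars t. vars (\<gamma> x))"
  by (induction t) auto

lemma eval_subst: "eval cI fI a (subst \<gamma> t) = eval cI fI (\<lambda>x. eval cI fI a (\<gamma> x)) t"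
proof (induction t)
  case (Fn f us)
  then have "map (eval cI fI a \<circ> subst \<gamma>) us = map (eval cI fI (\<lambda>x. eval cI fI a (\<gamma> x))) us"
    by auto
  then show ?case
    by (simp only: subst.simps eval.simps map_map)
qed auto

lemma atom_term_iff: "atom_term C u \<longleftrightarrow> u \<in> V ` UNIV \<union> Cn ` C"
  unfolding atom_term_def by blast

lemma atom_termE:
  assumes "atom_term C u"
  obtains x where "u = V x" | c where "u = Cn c" "c \<in> C"
  using assms unfolding atom_term_def by blast

lemma basic_term_FnD:
  "basic_term Fs ar C (Fn f w) \<Longrightarrow> f \<in> Fs \<and> length w = ar f \<and> (\<forall>u\<in>set w. atom_term C u)"
  unfolding basic_term_def atom_term_def by auto

lemma basic_term_cases:
  assumes "basic_term Fs ar C t"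
  obtains "atom_term C t" | f w where "t = Fn f w" "basic_term Fs ar C (Fn f w)"
  using assms unfolding basic_term_def by auto

fun atom_val :: "('c \<Rightarrow> 'k) \<Rightarrow> (nat \<Rightarrow> 'k) \<Rightarrow> ('f, 'c) trm \<Rightarrow> 'k" where
  "atom_val cI \<beta> (V x) = \<beta> x"
| "atom_val cI \<beta> (Cn c) = cI c"
| "atom_val cI \<beta> (Fn f us) = undefined"

lemma eval_atom_term: "atom_term C u \<Longrightarrow> eval cI fI \<beta> u = atom_val cI \<beta> u"
  by (elim atom_termE) auto

lemma eval_basic_Fn:
  assumes "basic_term Fs ar C (Fn f w)"
  shows "eval cI fI a (Fn f w) = fI f (map (atom_val cI a) w)"
proof -
  have "\<forall>u\<in>set w. eval cI fI a u = atom_val cI a u"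
    using basic_term_FnD[OF assms] eval_atom_term by blast
  then show ?thesis
    by (simp cong: map_cong)
qed

definition faithful :: "('c \<Rightarrow> 'k) \<Rightarrow> 'c set \<Rightarrow> (nat \<Rightarrow> 'k) \<Rightarrow> ('f, 'c) trm \<Rightarrow> bool" where
  "faithful cI C \<beta> t \<longleftrightarrow> inj_on \<beta> (vars t) \<and> \<beta> ` vars t \<inter> cI ` C = {}"

lemma faithful_arg_eq:
  assumes "faithful cI C a (Fn f w)" and "u \<in> set w" "v \<in> set w"
    and "atom_term C u" "atom_term C v"
    and "atom_val cI a u = atom_val cI a v" "atom_val cI a u \<notin> cI ` C"
  shows "u = v"
proof -
  obtain x y where "u = V x" "v = V y"
    using assms(4-7) by (elim atom_termE) (auto intro: rev_image_eqI)
  moreover have "x \<in> vars (Fn f w)" "y \<in> vars (Fn f w)"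
    using assms(2,3) calculation by force+
  ultimately show ?thesis
    using assms(1,6) unfolding faithful_def by (metis atom_val.simps(1) inj_on_eq_iff)
qed

lemma faithful_arg_const:
  assumes "faithful cI C a (Fn f w)" and "u \<in> set w" "atom_term C u"
    and "atom_val cI a u \<in> cI ` C"
  obtains d where "u = Cn d" "d \<in> C"
proof (rule atom_termE[OF assms(3)])
  fix x
  assume "u = V x"
  then have "x \<in> vars (Fn f w)"
    using assms(2) by force
  then show thesis
    using assms(1,4) \<open>u = V x\<close> unfolding faithful_def by auto
qed

lemma wc_Fn_replace_arg:
  assumes "basic_term Fs ar C (Fn f us)" "i < length us" "us ! i = Cn c" "c \<in> C" "d \<in> C"
    and "wc Fs ar C \<Sigma> X (Cn c, Cn d)"
  shows "wc Fs ar C \<Sigma> X (Fn f us, Fn f (us[i := Cn d]))"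
proof (rule wc_repl[OF assms(1,4,5,6)])
  show "replace_one c d (Fn f us) (Fn f (us[i := Cn d]))"
    unfolding replace_one_def using assms(2,3) by blast
qed

lemma wc_Fn_replace_args:
  assumes b: "basic_term Fs ar C (Fn f w1)" and vX: "vars (Fn f w1) \<subseteq> X"
    and len: "length w2 = length w1"
    and args: "\<forall>i<length w1. w1 ! i = w2 ! i \<or> (\<exists>c d. w1 ! i = Cn c \<and> w2 ! i = Cn d \<and>
                 c \<in> C \<and> d \<in> C \<and> wc Fs ar C \<Sigma> X (Cn c, Cn d))"
  shows "wc Fs ar C \<Sigma> X (Fn f w1, Fn f w2)"
proof -
  have fs: "f \<in> Fs" "length w1 = ar f" and at1: "\<forall>u\<in>set w1. atom_term C u"
    using basic_term_FnD[OF b] by auto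
  have at2: "\<forall>u\<in>set w2. atom_term C u"
  proof
    fix u
    assume "u \<in> set w2"
    then obtain i where i: "i < length w1" "u = w2 ! i"
      using len by (metis in_set_conv_nth)
    then show "atom_term C u"
      using at1 args nth_mem[of i w1] unfolding atom_term_def by fastforce
  qed
  have "k \<le> length w1 \<Longrightarrow> wc Fs ar C \<Sigma> X (Fn f w1, Fn f (take k w2 @ drop k w1))" for k
  proof (induction k)
    case 0
    show ?case
      using wc_refl[OF b vX] by simp
  next
    case (Suc k)
    let ?us = "take k w2 @ drop k w1"
    have k: "k < length w1"
      using Suc by simp
    have IH: "wc Fs ar C \<Sigma> X (Fn f w1, Fn f ?us)"
      using Suc by simp
    have us_k: "?us ! k = w1 ! k"
      using k len by (simp add: nth_append)
    have upd: "?us[k := w2 ! k] = take (Suc k) w2 @ drop (Suc k) w1"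
      using k len by (simp add: Cons_nth_drop_Suc[symmetric] list_update_append take_Suc_conv_app_nth)
    show ?case
    proof (cases "w1 ! k = w2 ! k")
      case True
      then show ?thesis
        using IH upd us_k by (metis list_update_id)
    next
      case False
      then obtain c d where cd: "w1 ! k = Cn c" "w2 ! k = Cn d" "c \<in> C" "d \<in> C"
        "wc Fs ar C \<Sigma> X (Cn c, Cn d)"
        using args k by blast
      have "basic_term Fs ar C (Fn f ?us)"
        unfolding basic_term_def using fs at1 at2 len k by (auto dest: in_set_takeD in_set_dropD)
      then have "wc Fs ar C \<Sigma> X (Fn f ?us, Fn f (?us[k := Cn d]))"
        using wc_Fn_replace_arg[of Fs ar C f ?us k c d] us_k cd k len by simp
      then show ?thesis
        using IH upd cd by (metis wc_trans)
    qed
  qed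
  from this[of "length w1"] show ?thesis
    using len by simp
qed

locale consistent_closure =
  fixes Fs :: "'f set" and ar :: "'f \<Rightarrow> nat" and C :: "'c set"
    and \<Sigma> :: "(('f, 'c) trm \<times> ('f, 'c) trm) set"
  assumes no_var_eq: "x \<noteq> y \<Longrightarrow> \<not> wc Fs ar C \<Sigma> UNIV (V x, V y)"
begin

abbreviation W where "W e \<equiv> wc Fs ar C \<Sigma> UNIV e"

lemma W_var_iff: "W (V x, V y) \<longleftrightarrow> x = y"
  using no_var_eq wc_refl[of Fs ar C "V y" UNIV] by (auto simp: basic_term_def atom_term_def)

lemma not_W_var_const: "\<not> W (V x, Cn c)"
proof
  assume h: "W (V x, Cn c)"
  have "W (subst (V(x := V (Suc x))) (V x), subst (V(x := V (Suc x))) (Cn c))"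
    by (rule wc_subst[OF h]) auto
  then have "W (V (Suc x), Cn c)"
    by simp
  with h have "W (V x, V (Suc x))"
    by (metis wc_sym wc_trans)
  then show False
    using no_var_eq by simp
qed

lemma not_W_Fn_var:
  assumes "x \<notin> vars (Fn f w)"
  shows "\<not> W (Fn f w, V x)"
proof
  assume h: "W (Fn f w, V x)"
  obtain y where y: "y \<notin> insert x (vars (Fn f w))"
    using ex_new_if_finite[of "insert x (vars (Fn f w))"] finite_vars by auto
  have "W (subst (V(x := V y)) (Fn f w), subst (V(x := V y)) (V x))"
    by (rule wc_subst[OF h]) auto
  moreover have "subst (V(x := V y)) (Fn f w) = Fn f w"
    using assms by (intro subst_id_on_vars) auto
  ultimately have "W (Fn f w, V y)"
    by simp
  with h have "W (V x, V y)"
    by (metis wc_sym wc_trans)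
  then show False
    using no_var_eq y by auto
qed

end

locale closure_model = consistent_closure Fs ar C \<Sigma>
  for Fs :: "'f set" and ar :: "'f \<Rightarrow> nat" and C :: "'c set"
    and \<Sigma> :: "(('f, 'c) trm \<times> ('f, 'c) trm) set" +
  fixes K :: "'k set" and g :: "'c \<Rightarrow> 'k" and default :: 'k
  assumes inj_g: "inj_on g C" and g_K: "g ` C \<subseteq> K" and default_K: "default \<in> K"
begin

definition const_rep :: "'c \<Rightarrow> 'c" where
  "const_rep c = (SOME d. d \<in> C \<and> W (Cn c, Cn d))"

definition const_interp :: "'c \<Rightarrow> 'k" where
  "const_interp c = g (const_rep c)"

lemma const_rep: "c \<in> C \<Longrightarrow> const_rep c \<in> C \<and> W (Cn c, Cn (const_rep c))"
  unfolding const_rep_def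
  by (rule someI[of _ c]) (auto intro: wc_refl simp: basic_term_def atom_term_def)

lemma const_interp_K: "c \<in> C \<Longrightarrow> const_interp c \<in> K"
  using const_rep g_K unfolding const_interp_def by blast

lemma W_const_iff:
  assumes "c \<in> C" "d \<in> C"
  shows "W (Cn c, Cn d) \<longleftrightarrow> const_interp c = const_interp d"
proof
  assume h: "W (Cn c, Cn d)"
  have "(\<lambda>e. e \<in> C \<and> W (Cn c, Cn e)) = (\<lambda>e. e \<in> C \<and> W (Cn d, Cn e))"
    using h wc_sym[OF h] by (blast intro: wc_trans)
  then show "const_interp c = const_interp d"
    unfolding const_interp_def const_rep_def by simp
next
  assume "const_interp c = const_interp d"
  then have "const_rep c = const_rep d"
    using inj_g const_rep assms unfolding const_interp_def inj_on_def by blast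
  then show "W (Cn c, Cn d)"
    using const_rep assms by (metis wc_sym wc_trans)
qed

abbreviation aval where "aval \<equiv> atom_val const_interp"

lemma W_atoms_same_value:
  assumes "atom_term C p" "atom_term C q" "W (p, q)"
  shows "aval a p = aval a q"
  using assms
  by (elim atom_termE) (auto dest: wc_sym simp: W_var_iff not_W_var_const W_const_iff)

definition fun_witness :: "'f \<Rightarrow> 'k list \<Rightarrow> ('f, 'c) trm list \<times> (nat \<Rightarrow> 'k) \<times> ('f, 'c) trm \<Rightarrow> bool" where
  "fun_witness f xs r \<longleftrightarrow> (case r of (w, \<beta>, p) \<Rightarrow>
     basic_term Fs ar C (Fn f w) \<and> map (aval \<beta>) w = xs \<and> (\<forall>x. \<beta> x \<in> K) \<and>
     faithful const_interp C \<beta> (Fn f w) \<and> atom_term C p \<and> W (Fn f w, p))"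

definition fun_interp :: "'f \<Rightarrow> 'k list \<Rightarrow> 'k" where
  "fun_interp f xs = (if \<exists>r. fun_witness f xs r
     then (case SOME r. fun_witness f xs r of (w, \<beta>, p) \<Rightarrow> aval \<beta> p) else default)"

lemma fun_interp_witnessed:
  assumes "fun_witness f xs r"
  obtains w \<beta> p where "fun_witness f xs (w, \<beta>, p)" "fun_interp f xs = aval \<beta> p"
proof -
  obtain w \<beta> p where e: "(SOME r. fun_witness f xs r) = (w, \<beta>, p)"
    by (metis prod_cases3)
  have "fun_witness f xs (w, \<beta>, p)"
    using someI[of "fun_witness f xs", OF assms] e by simp
  moreover have "fun_interp f xs = aval \<beta> p"
    using e unfolding fun_interp_def if_P[OF exI[of "fun_witness f xs", OF assms]] by simp
  ultimately show ?thesis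
    by (rule that)
qed

lemma faithful_arg_transfer:
  assumes fa: "faithful const_interp C a (Fn f w)" and at: "\<forall>u\<in>set w. atom_term C u"
    and v: "v \<in> set w" and u: "atom_term C u" and val: "aval a v = aval \<beta> u"
    and nc: "\<forall>x\<in>vars u. \<beta> x \<notin> const_interp ` C"
    and \<rho>: "\<forall>x\<in>vars u. \<rho> x \<in> set w \<and> aval a (\<rho> x) = \<beta> x"
  shows "atom_term C (subst \<rho> u) \<and> (subst \<rho> u = v \<or>
    (\<exists>c d. subst \<rho> u = Cn c \<and> v = Cn d \<and> c \<in> C \<and> d \<in> C \<and> W (Cn c, Cn d)))"
  using u
proof (cases rule: atom_termE)
  case (1 x)
  then have "\<rho> x = v"
    using faithful_arg_eq[OF fa, of "\<rho> x" v] \<rho> nc val at v by simp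
  then show ?thesis
    using 1 v at by simp
next
  case (2 c)
  moreover obtain d where "v = Cn d" "d \<in> C"
    using faithful_arg_const[OF fa v] at v val 2 by auto
  ultimately show ?thesis
    using val W_const_iff by (auto simp: atom_term_def)
qed

lemma witness_transfer_subst:
  assumes b0: "basic_term Fs ar C (Fn f w0)" and fa0: "faithful const_interp C \<beta>0 (Fn f w0)"
    and b: "basic_term Fs ar C (Fn f w)" and fa: "faithful const_interp C a (Fn f w)"
    and vals: "map (aval a) w = map (aval \<beta>0) w0"
  obtains \<rho> where "\<forall>x. \<rho> x \<in> V ` UNIV \<union> Cn ` C" "W (subst \<rho> (Fn f w0), Fn f w)"
    "\<forall>x\<in>vars (Fn f w0). aval a (\<rho> x) = \<beta>0 x"
proof -
  have at0: "\<forall>u\<in>set w0. atom_term C u" and at: "\<forall>u\<in>set w. atom_term C u"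
    and len: "length w0 = length w" and fs: "f \<in> Fs" "length w0 = ar f"
    using basic_term_FnD[OF b0] basic_term_FnD[OF b] by auto
  have val_i: "aval a (w ! i) = aval \<beta>0 (w0 ! i)" if "i < length w" for i
    using vals that by (metis len length_map nth_map)
  have value_in_w: "\<exists>v. v \<in> set w \<and> aval a v = \<beta>0 x" if x: "x \<in> vars (Fn f w0)" for x
  proof -
    obtain i where i: "i < length w0" "x \<in> vars (w0 ! i)"
      using x by (auto simp: in_set_conv_nth)
    moreover have "atom_term C (w0 ! i)"
      using at0 i by simp
    ultimately have "w0 ! i = V x"
      by (elim atom_termE) auto
    then show ?thesis
      using val_i i len by (metis atom_val.simps(1) nth_mem)
  qed
  define \<rho> where
    "\<rho> x = (if x \<in> vars (Fn f w0) then SOME v. v \<in> set w \<and> aval a v = \<beta>0 x else V x)" for x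
  have \<rho>: "\<rho> x \<in> set w \<and> aval a (\<rho> x) = \<beta>0 x" if "x \<in> vars (Fn f w0)" for x
    using someI_ex[OF value_in_w[OF that]] that unfolding \<rho>_def by simp
  have args: "atom_term C (subst \<rho> (w0 ! i)) \<and> (subst \<rho> (w0 ! i) = w ! i \<or>
      (\<exists>c d. subst \<rho> (w0 ! i) = Cn c \<and> w ! i = Cn d \<and> c \<in> C \<and> d \<in> C \<and> W (Cn c, Cn d)))"
    if i: "i < length w0" for i
  proof (rule faithful_arg_transfer[OF fa at])
    have sub: "vars (w0 ! i) \<subseteq> vars (Fn f w0)"
      using i nth_mem[of i w0] by fastforce
    then show "\<forall>x\<in>vars (w0 ! i). \<beta>0 x \<notin> const_interp ` C"
      using fa0 unfolding faithful_def by blast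
    show "\<forall>x\<in>vars (w0 ! i). \<rho> x \<in> set w \<and> aval a (\<rho> x) = \<beta>0 x"
      using sub \<rho> by blast
  qed (use i len at0 val_i in auto)
  have "basic_term Fs ar C (Fn f (map (subst \<rho>) w0))"
    unfolding basic_term_def using fs args by (auto simp: in_set_conv_nth)
  then have "W (subst \<rho> (Fn f w0), Fn f w)"
    using wc_Fn_replace_args[of Fs ar C f "map (subst \<rho>) w0" UNIV w] len args by auto
  moreover have "\<rho> x \<in> V ` UNIV \<union> Cn ` C" for x
    using \<rho>[of x] at unfolding \<rho>_def atom_term_iff by auto
  ultimately show ?thesis
    using that \<rho> by blast
qed

lemma witness_transfer:
  assumes r: "fun_witness f xs (w0, \<beta>0, p0)" and b: "basic_term Fs ar C (Fn f w)"
    and fa: "faithful const_interp C a (Fn f w)" and vals: "map (aval a) w = xs"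
  obtains q where "atom_term C q" "W (Fn f w, q)" "aval a q = aval \<beta>0 p0"
proof -
  have b0: "basic_term Fs ar C (Fn f w0)" and fa0: "faithful const_interp C \<beta>0 (Fn f w0)"
    and vals0: "map (aval \<beta>0) w0 = xs" and p0: "atom_term C p0" and W0: "W (Fn f w0, p0)"
    using r unfolding fun_witness_def by auto
  obtain \<rho> where \<rho>: "\<forall>x. \<rho> x \<in> V ` UNIV \<union> Cn ` C" "W (subst \<rho> (Fn f w0), Fn f w)"
    "\<forall>x\<in>vars (Fn f w0). aval a (\<rho> x) = \<beta>0 x"
    using witness_transfer_subst[OF b0 fa0 b fa] vals vals0 by metis
  have "W (subst \<rho> (Fn f w0), subst \<rho> p0)"
    using wc_subst[OF W0] \<rho>(1) by simp
  then have W: "W (Fn f w, subst \<rho> p0)"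
    using \<rho>(2) by (metis wc_sym wc_trans)
  show ?thesis
  proof (rule atom_termE[OF p0])
    fix x
    assume "p0 = V x"
    moreover have "x \<in> vars (Fn f w0)"
      using not_W_Fn_var W0 calculation by blast
    moreover have "atom_term C (\<rho> x)"
      using \<rho>(1) by (auto simp: atom_term_iff)
    ultimately show thesis
      using that[of "\<rho> x"] W \<rho>(3) by simp
  next
    fix c
    assume "p0 = Cn c"
    then show thesis
      using that[of p0] W p0 by simp
  qed
qed

lemma eval_faithful_W_atom:
  assumes b: "basic_term Fs ar C t" and fa: "faithful const_interp C a t" and aK: "\<forall>x. a x \<in> K"
    and p: "atom_term C p" "W (t, p)"
  shows "eval const_interp fun_interp a t = aval a p"
  using b
proof (cases rule: basic_term_cases)
  case 1
  then show ?thesis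
    using eval_atom_term W_atoms_same_value p by metis
next
  case (2 f w)
  have "fun_witness f (map (aval a) w) (w, a, p)"
    unfolding fun_witness_def using assms 2 by auto
  then obtain w0 \<beta>0 p0 where r: "fun_witness f (map (aval a) w) (w0, \<beta>0, p0)"
    and val: "fun_interp f (map (aval a) w) = aval \<beta>0 p0"
    by (rule fun_interp_witnessed)
  obtain q where q: "atom_term C q" "W (Fn f w, q)" "aval a q = aval \<beta>0 p0"
    using witness_transfer[OF r 2(2)] fa 2(1) by blast
  have "W (p, q)"
    using p q 2(1) by (metis wc_sym wc_trans)
  then show ?thesis
    using W_atoms_same_value p q val eval_basic_Fn[OF 2(2)] 2(1) by metis
qed

lemma eval_faithful_no_W_atom:
  assumes b: "basic_term Fs ar C t" and fa: "faithful const_interp C a t"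
    and np: "\<nexists>p. atom_term C p \<and> W (t, p)"
  shows "eval const_interp fun_interp a t = default"
  using b
proof (cases rule: basic_term_cases)
  case 1
  then show ?thesis
    using np wc_refl[OF b] by blast
next
  case (2 f w)
  have "fun_interp f (map (aval a) w) = default"
  proof (cases "\<exists>r. fun_witness f (map (aval a) w) r")
    case True
    then obtain w0 \<beta>0 p0 where "fun_witness f (map (aval a) w) (w0, \<beta>0, p0)"
      by (metis prod_cases3)
    then show ?thesis
      using witness_transfer[OF _ 2(2)] fa np 2(1) by metis
  qed (simp add: fun_interp_def)
  then show ?thesis
    unfolding 2(1) eval_basic_Fn[OF 2(2)] .
qed

lemma eval_faithful_W:
  assumes bs: "basic_term Fs ar C s" and bt: "basic_term Fs ar C t"
    and fs: "faithful const_interp C a s" and ft: "faithful const_interp C a t"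
    and aK: "\<forall>x. a x \<in> K" and W: "W (s, t)"
  shows "eval const_interp fun_interp a s = eval const_interp fun_interp a t"
proof (cases "\<exists>p. atom_term C p \<and> W (s, p)")
  case True
  then obtain p where p: "atom_term C p" "W (s, p)"
    by blast
  then have "W (t, p)"
    using W by (metis wc_sym wc_trans)
  then show ?thesis
    using eval_faithful_W_atom bs bt fs ft aK p by metis
next
  case False
  then have "\<nexists>p. atom_term C p \<and> W (t, p)"
    using W by (metis wc_trans)
  then show ?thesis
    using eval_faithful_no_W_atom bs bt fs ft False by metis
qed

definition normalising_subst :: "(nat \<Rightarrow> 'k) \<Rightarrow> nat \<Rightarrow> ('f, 'c) trm" where
  "normalising_subst a x = (if a x \<in> const_interp ` C
     then Cn (SOME c. c \<in> C \<and> const_interp c = a x) else V (LEAST y. a y = a x))"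

lemma some_const_with_value:
  assumes "v \<in> const_interp ` C"
  shows "(SOME c. c \<in> C \<and> const_interp c = v) \<in> C"
    and "const_interp (SOME c. c \<in> C \<and> const_interp c = v) = v"
proof -
  obtain c where "c \<in> C" "const_interp c = v"
    using assms by blast
  then show "(SOME c. c \<in> C \<and> const_interp c = v) \<in> C"
    and "const_interp (SOME c. c \<in> C \<and> const_interp c = v) = v"
    using someI[of "\<lambda>c. c \<in> C \<and> const_interp c = v" c] by blast+
qed

lemma normalising_subst_range: "normalising_subst a x \<in> V ` UNIV \<union> Cn ` C"
  unfolding normalising_subst_def using some_const_with_value[of "a x"] by simp

lemma eval_normalising_subst: "eval const_interp fI a (normalising_subst a x) = a x"
  unfolding normalising_subst_def
  using some_const_with_value[of "a x"] LeastI[of "\<lambda>y. a y = a x" x] by simp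

lemma vars_normalising_subst:
  assumes "z \<in> vars (normalising_subst a x)"
  shows "a z \<notin> const_interp ` C \<and> z = (LEAST y. a y = a z)"
proof -
  have nc: "a x \<notin> const_interp ` C" and z: "z = (LEAST y. a y = a x)"
    using assms unfolding normalising_subst_def by (auto split: if_splits)
  moreover have "a z = a x"
    unfolding z by (rule LeastI[of _ x]) simp
  ultimately show ?thesis
    by simp
qed

lemma faithful_normalising_subst: "faithful const_interp C a (subst (normalising_subst a) s)"
proof -
  have z: "a z \<notin> const_interp ` C \<and> z = (LEAST y. a y = a z)"
    if "z \<in> vars (subst (normalising_subst a) s)" for z
    using that vars_normalising_subst unfolding vars_subst by blast
  show ?thesis
    unfolding faithful_def inj_on_def
  proof (intro conjI ballI impI)
    fix z z'
    assume "z \<in> vars (subst (normalising_subst a) s)" "z' \<in> vars (subst (normalising_subst a) s)"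
      and "a z = a z'"
    then show "z = z'"
      using z by metis
  qed (use z in blast)
qed

lemma basic_term_subst_atoms:
  assumes "basic_term Fs ar C s" "\<forall>x. \<gamma> x \<in> V ` UNIV \<union> Cn ` C"
  shows "basic_term Fs ar C (subst \<gamma> s)"
proof -
  have "atom_term C (subst \<gamma> u)" if "atom_term C u" for u
    using that assms(2) by (elim atom_termE) (auto simp: atom_term_def)
  then show ?thesis
    using assms(1) unfolding basic_term_def by auto
qed

lemma is_model_K:
  assumes "\<forall>e\<in>\<Sigma>. basic_identity Fs ar C e"
  shows "is_model Fs ar C \<Sigma> K const_interp fun_interp"
  unfolding is_model_def is_structure_def
proof (intro conjI ballI allI impI)
  show "K \<noteq> {}"
    using default_K by auto
  show "const_interp c \<in> K" if "c \<in> C" for c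
    using const_interp_K that by simp
  show "fun_interp f xs \<in> K" for f xs
  proof (cases "\<exists>r. fun_witness f xs r")
    case True
    then obtain w \<beta> p where r: "fun_witness f xs (w, \<beta>, p)" and v: "fun_interp f xs = aval \<beta> p"
      by (metis fun_interp_witnessed)
    from r have "atom_term C p" "\<forall>x. \<beta> x \<in> K"
      unfolding fun_witness_def by auto
    then show ?thesis
      using v const_interp_K by (elim atom_termE) auto
  qed (simp add: fun_interp_def default_K)
  fix e and a :: "nat \<Rightarrow> 'k"
  assume e: "e \<in> \<Sigma>" and aK: "\<forall>x. a x \<in> K"
  obtain s t where st: "e = (s, t)"
    by fastforce
  let ?\<gamma> = "normalising_subst a"
  have b: "basic_term Fs ar C (subst ?\<gamma> s)" "basic_term Fs ar C (subst ?\<gamma> t)"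
    using assms e st basic_term_subst_atoms normalising_subst_range
    unfolding basic_identity_def by auto
  have "W (subst ?\<gamma> s, subst ?\<gamma> t)"
    using wc_subst[OF wc_ax[OF e[unfolded st]]] normalising_subst_range by simp
  then have "eval const_interp fun_interp a (subst ?\<gamma> s) = eval const_interp fun_interp a (subst ?\<gamma> t)"
    using eval_faithful_W b faithful_normalising_subst aK by blast
  then show "eval const_interp fun_interp a (fst e) = eval const_interp fun_interp a (snd e)"
    using st by (simp add: eval_subst eval_normalising_subst)
qed

end

lemma consistent_no_var_eq:
  assumes "consistent Fs ar C \<Sigma>" "x \<noteq> y"
  shows "\<not> wc Fs ar C \<Sigma> UNIV (V x, V y)"
proof -
  have "large_enough ar \<Sigma> (UNIV :: nat set)"
    unfolding large_enough_def by (auto intro!: subset_imp_lepoll)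
  then show ?thesis
    using assms unfolding consistent_def inconsistent_def by blast
qed

theorem corollary4p5:
  fixes Fs :: "'f set" and ar :: "'f \<Rightarrow> nat" and C :: "'c set"
    and \<Sigma> :: "(('f, 'c) trm \<times> ('f, 'c) trm) set" and K :: "'k set"
  assumes "\<forall>f\<in>Fs. 0 < ar f"
    and "\<forall>e\<in>\<Sigma>. basic_identity Fs ar C e"
    and "consistent Fs ar C \<Sigma>"
    and "C \<prec> K"
  shows "\<exists>M cI fI. M \<approx> K \<and> is_model Fs ar C \<Sigma> (M :: 'k set) cI fI"
proof -
  obtain g where g: "inj_on g C" "g ` C \<subseteq> K"
    using assms(4) unfolding lesspoll_def lepoll_def by blast
  obtain default where "default \<in> K"
    using assms(4) g eqpoll_refl unfolding lesspoll_def by fastforce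
  then interpret closure_model Fs ar C \<Sigma> K g default
    using g consistent_no_var_eq[OF assms(3)] by unfold_locales auto
  show ?thesis
    using is_model_K[OF assms(2)] eqpoll_refl by blast
qed

end
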